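(* Let $A=(A,\wedge,\vee,\cdot,\to,1)$ be a $\mathsf{DLCMI}$ and $a\in A$. Then $(1\to a)^n\le 1\to a^n$ for every natural number $n$.
   Context: An algebra $(A,\wedge,\vee,\cdot,\to,1)$ of type $(2,2,2,2,0)$ is a $\mathsf{DLCMI}$ if for all $a,b,c\in A$: (1) $(A,\wedge,\vee)$ is a distributive lattice; (2) $1$ is its largest element; (3) $(A,\cdot,1)$ is a commutative monoid; (4) $(a\to b)\wedge(a\to c)=a\to(b\wedge c)$; (5) $(a\to c)\wedge(b\to c)=(a\vee b)\to c$; (6) $a\to a=1$; (7) $(a\vee b)\cdot c=(a\cdot c)\vee(b\cdot c)$; (8) $(a\to b)\cdot(b\to c)\le a\to c$; (9) $a\to b\le (a\cdot c)\to(b\cdot c)$. Powers: $x^0=1$, $x^{m}=x\cdot x^{m-1}$. *)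

theory Defs
  imports Main
begin

locale dlcmi =
  fixes m :: "'a::{distrib_lattice, order_top} \<Rightarrow> 'a \<Rightarrow> 'a"
    and imp :: "'a \<Rightarrow> 'a \<Rightarrow> 'a"
  assumes m_assoc: "m (m a b) c = m a (m b c)"
    and m_comm: "m a b = m b a"
    and m_unit: "m top a = a"
    and imp_inf: "inf (imp a b) (imp a c) = imp a (inf b c)"
    and imp_sup: "inf (imp a c) (imp b c) = imp (sup a b) c"
    and imp_refl: "imp a a = top"
    and m_sup: "m (sup a b) c = sup (m a c) (m b c)"
    and imp_trans: "m (imp a b) (imp b c) \<le> imp a c"
    and imp_mono: "imp a b \<le> imp (m a c) (m b c)"

fun mpow :: "('a \<Rightarrow> 'a \<Rightarrow> 'a) \<Rightarrow> 'a::order_top \<Rightarrow> nat \<Rightarrow> 'a" where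
  "mpow m x 0 = top"
| "mpow m x (Suc n) = m x (mpow m x n)"

end

theory Submission
  imports Defs
begin

text \<open>The key step is (1 \<rightarrow> x)(1 \<rightarrow> y) \<le> 1 \<rightarrow> xy: axiom (9) with c = x turns
  1 \<rightarrow> y into x \<rightarrow> yx, and then transitivity (8) through x finishes.\<close>

context dlcmi
begin

lemma m_mono_left: "x \<le> y \<Longrightarrow> m x c \<le> m y c"
  by (metis m_sup sup.absorb2 sup.cobounded1)

lemma m_mono_right: "x \<le> y \<Longrightarrow> m c x \<le> m c y"
  using m_mono_left[of x y c] by (simp add: m_comm)

lemma m_imp_top_le: "m (imp top x) (imp top y) \<le> imp top (m x y)"
proof -
  have "imp top y \<le> imp x (m y x)"
    using imp_mono[of top y x] by (simp add: m_unit)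
  then have "m (imp top x) (imp top y) \<le> m (imp top x) (imp x (m y x))"
    by (rule m_mono_right)
  also have "\<dots> \<le> imp top (m y x)"
    by (rule imp_trans)
  finally show ?thesis
    by (simp add: m_comm)
qed

lemma mpow_imp_top_le: "mpow m (imp top a) n \<le> imp top (mpow m a n)"
proof (induction n)
  case 0
  show ?case by (simp add: imp_refl)
next
  case (Suc n)
  have "mpow m (imp top a) (Suc n) \<le> m (imp top a) (imp top (mpow m a n))"
    using Suc m_mono_right by simp
  also have "\<dots> \<le> imp top (mpow m a (Suc n))"
    using m_imp_top_le by simp
  finally show ?case .
qed

end

theorem lemma3p7:
  fixes m :: "'a::{distrib_lattice, order_top} \<Rightarrow> 'a \<Rightarrow> 'a"
    and imp :: "'a \<Rightarrow> 'a \<Rightarrow> 'a"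
  assumes "dlcmi m imp"
  shows "\<forall>n::nat. mpow m (imp top a) n \<le> imp top (mpow m a n)"
  using dlcmi.mpow_imp_top_le[OF assms] by blast

end
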